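(* Let $\theta$ be a real-valued treatment-effect parameter, $\delta\in\mathbb{R}$ a clinical margin and $c\in(0,1)$. Let $\pi_{\mathrm{a}}$ (analysis prior) and $\pi_{\mathrm{d}}$ (design prior) be probability distributions on $\theta$ with $\Pr_{\mathrm{d}}(\theta\le\delta)>0$, and let data $\mathcal{D}$ have sampling distribution $f(\mathcal{D}\mid\theta)$. Define $\mathcal{S}(\mathcal{D};c)=\mathbb{I}\{\Pr_{\mathrm{a}}(\theta>\delta\mid\mathcal{D})>c\}$ with $\Pr_{\mathrm{a}}(\cdot\mid\mathcal{D})$ the posterior under $\pi_{\mathrm{a}}$, and the power function $\beta(\theta)=\Pr\{\mathcal{S}(\mathcal{D};c)=1\mid\theta\}$ (probability over $\mathcal{D}\sim f(\cdot\mid\theta)$). Assume $\beta(\theta)$ is strictly increasing in $\theta$. Let the frequentist Type I error rate be $\alpha(c)=\beta(\delta)$ and the Bayesian Type I error rate be $\alpha_B(c)=\int_{\theta\le\delta}\beta(\theta)\,\pi_{\mathrm{d}}(\theta\mid\theta\le\delta)\,d\theta$. Then $\alpha_B(c)\le\alpha(c)$, with equality if and only if $\pi_{\mathrm{d}}$ is a point mass at $\theta=\delta$.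
   Context: $\pi_{\mathrm{d}}(\theta\mid\theta\le\delta)$ denotes the design prior restricted to and renormalized on $\{\theta\le\delta\}$ (the integral is understood with respect to this conditional distribution in general). *)

theory Defs
  imports "HOL-Probability.Probability"
begin

text \<open>The data live in a measurable space given by a measure M (dominating measure);
  the sampling distribution f(D | theta) is given as a density f theta w.r.t. M.\<close>

definition post_prob :: "real measure \<Rightarrow> (real \<Rightarrow> 'd \<Rightarrow> real) \<Rightarrow> real \<Rightarrow> 'd \<Rightarrow> real" where
  "post_prob pa f \<delta> x =
     (\<integral>\<theta>. indicator {\<delta><..} \<theta> * f \<theta> x \<partial>pa) / (\<integral>\<theta>. f \<theta> x \<partial>pa)"

definition success :: "real measure \<Rightarrow> (real \<Rightarrow> 'd \<Rightarrow> real) \<Rightarrow> real \<Rightarrow> real \<Rightarrow> 'd \<Rightarrow> bool" where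
  "success pa f \<delta> c x \<longleftrightarrow> post_prob pa f \<delta> x > c"

definition sampling :: "'d measure \<Rightarrow> (real \<Rightarrow> 'd \<Rightarrow> real) \<Rightarrow> real \<Rightarrow> 'd measure" where
  "sampling M f \<theta> = density M (\<lambda>x. ennreal (f \<theta> x))"

definition power :: "real measure \<Rightarrow> 'd measure \<Rightarrow> (real \<Rightarrow> 'd \<Rightarrow> real) \<Rightarrow> real \<Rightarrow> real \<Rightarrow> real \<Rightarrow> real" where
  "power pa M f \<delta> c \<theta> = measure (sampling M f \<theta>) {x \<in> space M. success pa f \<delta> c x}"

definition alpha_freq :: "real measure \<Rightarrow> 'd measure \<Rightarrow> (real \<Rightarrow> 'd \<Rightarrow> real) \<Rightarrow> real \<Rightarrow> real \<Rightarrow> real" where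
  "alpha_freq pa M f \<delta> c = power pa M f \<delta> c \<delta>"

text \<open>Bayesian Type I error rate: integral of beta against the design prior restricted to
  and renormalized on {theta <= delta} (uniform_measure = renormalized restriction).\<close>
definition alpha_bayes :: "real measure \<Rightarrow> real measure \<Rightarrow> 'd measure \<Rightarrow> (real \<Rightarrow> 'd \<Rightarrow> real) \<Rightarrow> real \<Rightarrow> real \<Rightarrow> real" where
  "alpha_bayes pa pd M f \<delta> c = (\<integral>\<theta>. power pa M f \<delta> c \<theta> \<partial>(uniform_measure pd {..\<delta>}))"

end

theory Submission
  imports Defs
begin

text \<open>The power function is strictly increasing and the renormalised design prior lives on
  \<open>{..\<delta>}\<close>, so averaging it can only lose against its value at the right end point \<open>\<delta>\<close>;
  nothing is lost exactly when almost all mass sits at \<open>\<delta>\<close>, i.e. when the prior is the Dirac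
  measure there. Only monotonicity and boundedness of the power function enter the argument;
  the hypotheses on \<open>c\<close>, the analysis prior and the density merely make it meaningful.\<close>

lemma prob_space_eq_return_if_AE_eq:
  assumes "prob_space M" "sets M = sets N" "AE x in M. x = a"
  shows "M = return N a"
proof (rule measure_eqI)
  interpret prob_space M by fact
  show "sets M = sets (return N a)" using assms(2) by simp
  fix A assume A: "A \<in> sets M"
  show "emeasure M A = emeasure (return N a) A"
  proof (cases "a \<in> A")
    case True
    have "AE x in M. x \<in> A" using assms(3) by eventually_elim (use True in auto)
    then have "emeasure M A = 1" using emeasure_eq_1_AE A by simp
    then show ?thesis using True A assms(2) by simp
  next
    case False
    have "AE x in M. x \<notin> A" using assms(3) by eventually_elim (use False in auto)
    moreover have "{x \<in> space M. \<not> x \<notin> A} = A" using sets.sets_into_space[OF A] by auto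
    ultimately have "emeasure M A = 0" using AE_iff_measurable[OF A] by simp
    then show ?thesis using False A assms(2) by simp
  qed
qed

lemma integral_mono_le_upper_bound:
  fixes M :: "'a::linorder measure" and g :: "'a \<Rightarrow> real"
  assumes "prob_space M" "integrable M g" "mono g" "AE t in M. t \<le> d"
  shows "integral\<^sup>L M g \<le> g d"
proof -
  interpret prob_space M by fact
  have "AE t in M. g t \<le> g d" using assms(4) by eventually_elim (use assms(3) monoD in auto)
  then show ?thesis using integral_mono_AE[OF assms(2), of "\<lambda>_. g d"] prob_space by simp
qed

lemma integral_strict_mono_eq_upper_bound_iff:
  fixes M :: "'a::linorder measure" and g :: "'a \<Rightarrow> real"
  assumes "prob_space M" and int: "integrable M g" and g: "strict_mono g"
    and le: "AE t in M. t \<le> d"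
  shows "integral\<^sup>L M g = g d \<longleftrightarrow> (AE t in M. t = d)"
proof -
  interpret prob_space M by fact
  show ?thesis
  proof
    assume "integral\<^sup>L M g = g d"
    then have "integral\<^sup>L M (\<lambda>t. g d - g t) = 0" using int prob_space by simp
    moreover have "AE t in M. 0 \<le> g d - g t"
      using le by eventually_elim (use g strict_mono_less_eq in auto)
    ultimately have "AE t in M. g d - g t = 0"
      using integral_nonneg_eq_0_iff_AE[of M "\<lambda>t. g d - g t"] int by simp
    then show "AE t in M. t = d" by eventually_elim (simp add: strict_mono_eq[OF g])
  next
    assume "AE t in M. t = d"
    then have "AE t in M. g t = g d" by eventually_elim simp
    then have "integral\<^sup>L M g = integral\<^sup>L M (\<lambda>_. g d)"
      using int by (intro integral_cong_AE) auto
    then show "integral\<^sup>L M g = g d" using prob_space by simp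
  qed
qed

lemma power_nonneg_le_1:
  assumes "\<And>\<theta>. prob_space (sampling M f \<theta>)"
  shows "0 \<le> power pa M f \<delta> c \<theta> \<and> power pa M f \<delta> c \<theta> \<le> 1"
  unfolding power_def using prob_space.prob_le_1[OF assms] by auto

lemma prob_space_uniform_measure_measure_pos:
  assumes "prob_space M" "measure M A > 0"
  shows "prob_space (uniform_measure M A)"
proof (rule prob_space_uniform_measure)
  interpret prob_space M by fact
  show "emeasure M A \<noteq> 0" "emeasure M A \<noteq> \<infinity>"
    using assms(2) emeasure_eq_measure by auto
qed

theorem proposition2:
  fixes pa pd :: "real measure" and M :: "'d measure"
    and f :: "real \<Rightarrow> 'd \<Rightarrow> real" and \<delta> c :: real
  assumes c: "0 < c" "c < 1"
    and pa: "prob_space pa" "sets pa = sets borel"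
    and pd: "prob_space pd" "sets pd = sets borel"
    and pd_pos: "measure pd {..\<delta>} > 0"
    and f_nonneg: "\<And>\<theta> x. x \<in> space M \<Longrightarrow> 0 \<le> f \<theta> x"
    and f_meas: "(\<lambda>(\<theta>, x). f \<theta> x) \<in> borel_measurable (borel \<Otimes>\<^sub>M M)"
    and f_prob: "\<And>\<theta>. prob_space (sampling M f \<theta>)"
    and mono: "strict_mono (power pa M f \<delta> c)"
  shows "alpha_bayes pa pd M f \<delta> c \<le> alpha_freq pa M f \<delta> c
    \<and> (alpha_bayes pa pd M f \<delta> c = alpha_freq pa M f \<delta> c
         \<longleftrightarrow> uniform_measure pd {..\<delta>} = return borel \<delta>)"
proof -
  define \<beta> where "\<beta> = power pa M f \<delta> c"
  define U where "U = uniform_measure pd {..\<delta>}"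
  have \<beta>_mono: "strict_mono \<beta>" using mono unfolding \<beta>_def .
  have U: "prob_space U"
    unfolding U_def using pd(1) pd_pos by (rule prob_space_uniform_measure_measure_pos)
  have sets_U: "sets U = sets borel" unfolding U_def using pd(2) by simp
  have "\<beta> \<in> borel_measurable U"
    using borel_measurable_mono[OF strict_mono_mono[OF \<beta>_mono]]
    by (simp add: measurable_cong_sets[OF sets_U refl])
  then have int: "integrable U \<beta>"
    using power_nonneg_le_1[OF f_prob] unfolding \<beta>_def
    by (intro finite_measure.integrable_const_bound[OF prob_space.finite_measure[OF U], where B=1])
      auto
  have le: "AE t in U. t \<le> \<delta>"
    unfolding U_def using pd(2) by (intro AE_uniform_measureI) auto
  have "alpha_bayes pa pd M f \<delta> c = integral\<^sup>L U \<beta>" "alpha_freq pa M f \<delta> c = \<beta> \<delta>"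
    unfolding alpha_bayes_def alpha_freq_def U_def \<beta>_def by simp_all
  moreover have "integral\<^sup>L U \<beta> \<le> \<beta> \<delta>"
    using integral_mono_le_upper_bound[OF U int strict_mono_mono[OF \<beta>_mono] le] .
  moreover have "integral\<^sup>L U \<beta> = \<beta> \<delta> \<longleftrightarrow> (AE t in U. t = \<delta>)"
    using integral_strict_mono_eq_upper_bound_iff[OF U int \<beta>_mono le] .
  moreover have "U = return borel \<delta> \<longleftrightarrow> (AE t in U. t = \<delta>)"
    using prob_space_eq_return_if_AE_eq[OF U sets_U] by (auto simp: AE_return)
  ultimately show ?thesis unfolding U_def by argo
qed

end
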